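(* Let $A\in\mathbb{C}^{n\times n}$, and fix $A^-\in A\{1\}$ and $A^{GD}\in A\{GD\}$. Let $A^{1GD}=A^{-}AA^{GD}$. Then: (i) $AA^{1GD}A=A$ and $A^{1GD}AA^{1GD}=A^{1GD}$; (ii) $A^mA^{1GD} =A^mA^{GD}$ and $A^{1GD}A^m = A^{-}A^m$ for every positive integer $m$; (iii) $AA^{1GD}=P_{R(A),N(AA^{GD})}$; (iv) $A^{1GD}A=P_{R(A^{-}A),N(A)}$.
   Context: For $A\in\mathbb{C}^{n\times n}$, $ind(A)$ is the smallest nonnegative integer $k$ with $\mathrm{rank}(A^k)=\mathrm{rank}(A^{k+1})$. $A\{1\}$ is the set of matrices $X$ with $AXA=A$. With $k=ind(A)$, $A\{GD\}$ is the set of G-Drazin inverses of $A$: matrices $X$ with $AXA=A$, $XA^{k+1}=A^k$, $A^{k+1}X=A^k$. $R(\cdot)$, $N(\cdot)$ denote range and null space; $P_{S,T}$ is the projector onto $S$ along $T$. *)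

theory Defs
  imports "HOL-Analysis.Analysis"
begin

primrec matpow :: "'a::comm_ring_1^'n^'n \<Rightarrow> nat \<Rightarrow> 'a^'n^'n" where
  "matpow A 0 = mat 1"
| "matpow A (Suc k) = A ** matpow A k"

definition ind :: "complex^'n^'n \<Rightarrow> nat" where
  "ind A = (LEAST k. rank (matpow A k) = rank (matpow A (Suc k)))"

definition inner1 :: "complex^'n^'n \<Rightarrow> (complex^'n^'n) set" where
  "inner1 A = {X. A ** X ** A = A}"

definition GD_inv :: "complex^'n^'n \<Rightarrow> (complex^'n^'n) set" where
  "GD_inv A = {X. A ** X ** A = A
              \<and> X ** matpow A (Suc (ind A)) = matpow A (ind A)
              \<and> matpow A (Suc (ind A)) ** X = matpow A (ind A)}"

definition mrange :: "complex^'n^'m \<Rightarrow> (complex^'m) set" where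
  "mrange A = range (\<lambda>x. A *v x)"

definition mnull :: "complex^'n^'m \<Rightarrow> (complex^'n) set" where
  "mnull A = {x. A *v x = 0}"

definition is_proj_onto_along :: "complex^'n^'n \<Rightarrow> (complex^'n) set \<Rightarrow> (complex^'n) set \<Rightarrow> bool" where
  "is_proj_onto_along P S T \<longleftrightarrow>
     subspace S \<and> subspace T \<and> S \<inter> T = {0} \<and>
     (\<forall>x. \<exists>s\<in>S. \<exists>t\<in>T. x = s + t) \<and>
     (\<forall>s\<in>S. \<forall>t\<in>T. P *v (s + t) = s)"

end

theory Submission
  imports Defs
begin

text \<open>Only the inner-inverse property of \<open>A\<^sup>G\<^sup>D\<close> is needed: for inner inverses \<open>X\<close>, \<open>Y\<close>
  of \<open>A\<close> the product \<open>Z = X A Y\<close> satisfies \<open>A Z = A Y\<close> and \<open>Z A = X A\<close>, from which the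
  identities follow by associativity. Moreover \<open>A Y\<close> and \<open>X A\<close> are idempotents with
  \<open>R(A Y) = R(A)\<close> and \<open>N(X A) = N(A)\<close>, and every idempotent is the projector onto its
  range along its null space.\<close>

lemma matpow_Suc_right: "matpow A (Suc k) = matpow A k ** A"
proof (induction k)
  case 0
  show ?case by (simp add: matrix_mul_lid matrix_mul_rid)
next
  case (Suc k)
  then show ?case by (simp add: matrix_mul_assoc)
qed

lemma matpow_mult_eq_if_mult_eq:
  assumes "A ** Z = A ** W" and "m \<ge> 1"
  shows "matpow A m ** Z = matpow A m ** W"
proof -
  obtain k where m: "m = Suc k" using \<open>m \<ge> 1\<close> by (cases m) auto
  have "matpow A m ** Z = matpow A k ** (A ** Z)"
    by (simp add: m matpow_Suc_right matrix_mul_assoc del: matpow.simps)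
  also have "\<dots> = matpow A k ** (A ** W)" using assms(1) by simp
  also have "\<dots> = matpow A m ** W"
    by (simp add: m matpow_Suc_right matrix_mul_assoc del: matpow.simps)
  finally show ?thesis .
qed

lemma mult_matpow_eq_if_mult_eq:
  assumes "Z ** A = W ** A" and "m \<ge> 1"
  shows "Z ** matpow A m = W ** matpow A m"
proof -
  obtain k where m: "m = Suc k" using \<open>m \<ge> 1\<close> by (cases m) auto
  have "Z ** matpow A m = (Z ** A) ** matpow A k" by (simp add: m matrix_mul_assoc)
  also have "\<dots> = (W ** A) ** matpow A k" using assms(1) by simp
  also have "\<dots> = W ** matpow A m" by (simp add: m matrix_mul_assoc)
  finally show ?thesis .
qed

lemma inner_inverse_mult_left:
  assumes "A ** X ** A = A"
  shows "A ** (X ** A ** Y) = A ** Y"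
  by (metis assms matrix_mul_assoc)

lemma inner_inverse_mult_right:
  assumes "A ** Y ** A = A"
  shows "(X ** A ** Y) ** A = X ** A"
  by (metis assms matrix_mul_assoc)

lemma inner_inverse_idempotent:
  assumes "A ** X ** A = A"
  shows "(A ** X) ** (A ** X) = A ** X" and "(X ** A) ** (X ** A) = X ** A"
  by (metis assms matrix_mul_assoc)+

lemma mrange_mult_inner_inverse:
  assumes "A ** X ** A = A"
  shows "mrange (A ** X) = mrange A"
proof
  show "mrange (A ** X) \<subseteq> mrange A"
    unfolding mrange_def by (auto simp: matrix_vector_mul_assoc[symmetric])
  have "A *v x = (A ** X) *v (A *v x)" for x
    by (metis assms matrix_vector_mul_assoc)
  then show "mrange A \<subseteq> mrange (A ** X)"
    unfolding mrange_def by blast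
qed

lemma mnull_inner_inverse_mult:
  assumes "A ** X ** A = A"
  shows "mnull (X ** A) = mnull A"
proof
  show "mnull A \<subseteq> mnull (X ** A)"
    unfolding mnull_def by (auto simp: matrix_vector_mul_assoc[symmetric])
  have "A *v x = 0" if "(X ** A) *v x = 0" for x
  proof -
    have "A *v x = A *v ((X ** A) *v x)"
      by (metis assms matrix_vector_mul_assoc matrix_mul_assoc)
    then show ?thesis using that by simp
  qed
  then show "mnull (X ** A) \<subseteq> mnull A"
    unfolding mnull_def by blast
qed

lemma idempotent_is_proj_onto_along:
  fixes P :: "complex^'n^'n"
  assumes "P ** P = P"
  shows "is_proj_onto_along P (mrange P) (mnull P)"
proof -
  have PP: "P *v (P *v x) = P *v x" for x
    by (metis assms matrix_vector_mul_assoc)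
  have subspaces: "subspace (mrange P)" "subspace (mnull P)"
    unfolding mrange_def mnull_def
    by (auto intro: linear_subspace_image linear_subspace_kernel simp: matrix_vector_mul_linear)
  have "x = 0" if "x \<in> mrange P" "x \<in> mnull P" for x
    using that PP unfolding mrange_def mnull_def by auto
  then have trivial_meet: "mrange P \<inter> mnull P = {0}"
    using subspaces subspace_0 by blast
  have "x - P *v x \<in> mnull P" for x
    unfolding mnull_def by (simp add: matrix_vector_mult_diff_distrib PP)
  then have decomposition: "\<exists>s\<in>mrange P. \<exists>t\<in>mnull P. x = s + t" for x
    unfolding mrange_def by (metis rangeI diff_add_cancel add.commute)
  have "P *v (s + t) = s" if "s \<in> mrange P" "t \<in> mnull P" for s t
    using that PP unfolding mrange_def mnull_def by (auto simp: matrix_vector_right_distrib)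
  then show ?thesis
    unfolding is_proj_onto_along_def using subspaces trivial_meet decomposition by blast
qed

theorem theorem3p3:
  fixes A Am AGD :: "complex^'n^'n"
  assumes "Am \<in> inner1 A" and "AGD \<in> GD_inv A"
  defines "A1GD \<equiv> Am ** A ** AGD"
  shows "(A ** A1GD ** A = A \<and> A1GD ** A ** A1GD = A1GD)
    \<and> (\<forall>m::nat. m \<ge> 1 \<longrightarrow>
           matpow A m ** A1GD = matpow A m ** AGD \<and> A1GD ** matpow A m = Am ** matpow A m)
    \<and> is_proj_onto_along (A ** A1GD) (mrange A) (mnull (A ** AGD))
    \<and> is_proj_onto_along (A1GD ** A) (mrange (Am ** A)) (mnull A)"
proof -
  have Am: "A ** Am ** A = A" using assms(1) by (simp add: inner1_def)
  have AGD: "A ** AGD ** A = A" using assms(2) by (simp add: GD_inv_def)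
  have left: "A ** A1GD = A ** AGD"
    unfolding A1GD_def using inner_inverse_mult_left[OF Am] .
  have right: "A1GD ** A = Am ** A"
    unfolding A1GD_def using inner_inverse_mult_right[OF AGD] .
  have "A ** A1GD ** A = A" using left AGD by simp
  moreover have "A1GD ** A ** A1GD = A1GD"
    using right inner_inverse_mult_left[OF Am] unfolding A1GD_def by (metis matrix_mul_assoc)
  moreover have "is_proj_onto_along (A ** A1GD) (mrange A) (mnull (A ** AGD))"
    using idempotent_is_proj_onto_along[OF inner_inverse_idempotent(1)[OF AGD]]
    by (simp add: left mrange_mult_inner_inverse[OF AGD])
  moreover have "is_proj_onto_along (A1GD ** A) (mrange (Am ** A)) (mnull A)"
    using idempotent_is_proj_onto_along[OF inner_inverse_idempotent(2)[OF Am]]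
    by (simp add: right mnull_inner_inverse_mult[OF Am])
  ultimately show ?thesis
    using matpow_mult_eq_if_mult_eq[OF left] mult_matpow_eq_if_mult_eq[OF right] by blast
qed

end
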